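(* There is a function $g(n)=O(\ln\ln n)$ such that for every positive integer $r$ and every feasible instance $(S,\mathcal T)$ of test set with redundancy $r$ with $|S|=n$, every $r$-test set $\mathcal T'$ returned by the set cover greedy algorithm SGA (with any tie-breaking) satisfies $$|\mathcal T'|\le \Big(\big(2-\tfrac{1}{2r}\big)\ln n+\tfrac{3}{2}\ln r+g(n)\Big)\, m^*,$$ where $m^*$ is the minimum cardinality of an $r$-test set of $S$ contained in $\mathcal T$. That is, the approximation ratio of SGA for test set with redundancy $r$ can be $(2-\frac{1}{2r})\ln n+\frac{3}{2}\ln r+O(\ln\ln n)$.
   Context: Test set with redundancy $r\in\mathbb Z^+$: the input is a finite set of items $S$ with $|S|=n$ and a collection $\mathcal T$ of subsets of $S$ (called tests); it is assumed that there are no two tests $T_1,T_2\in\mathcal T$ with $T_1=S-T_2$. An item pair is a set $\{i,j\}$ of two different items of $S$. A test $T$ differentiates an item pair $a$ (written $a\perp T$) if $|T\cap a|=1$; for a family $\mathcal F$ of tests, $\perp(a,\mathcal F)$ denotes the number of tests in $\mathcal F$ that differentiate $a$. A family $\mathcal T'\subseteq\mathcal T$ is an $r$-test set of $S$ if every item pair is differentiated by at least $r$ different tests of $\mathcal T'$; the goal is to find an $r$-test set of minimum cardinality (the instance is feasible if some $r$-test set exists). For a family $\bar{\mathcal T}\subseteq\mathcal T$ (a partial $r$-test set) define the differentiation measure $\#(\bar{\mathcal T})=\sum_a\max(r-\perp(a,\bar{\mathcal T}),0)$, the sum over all item pairs $a$. The set cover greedy algorithm SGA: start with $\bar{\mathcal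 T}=\varnothing$; while $\#(\bar{\mathcal T})>0$, select a test $T\in\mathcal T-\bar{\mathcal T}$ minimizing $\#(\bar{\mathcal T}\cup\{T\})$ and set $\bar{\mathcal T}\leftarrow\bar{\mathcal T}\cup\{T\}$; return $\bar{\mathcal T}$. *)

theory Defs
  imports Complex_Main "HOL-Library.Landau_Symbols"
begin

definition item_pairs :: "'a set \<Rightarrow> 'a set set" where
  "item_pairs S = {a. a \<subseteq> S \<and> card a = 2}"

definition differentiates :: "'a set \<Rightarrow> 'a set \<Rightarrow> bool" where
  "differentiates a T \<longleftrightarrow> card (T \<inter> a) = 1"

definition num_diff :: "'a set \<Rightarrow> 'a set set \<Rightarrow> nat" where
  "num_diff a F = card {T \<in> F. differentiates a T}"

definition valid_instance :: "'a set \<Rightarrow> 'a set set \<Rightarrow> bool" where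
  "valid_instance S TT \<longleftrightarrow> finite S \<and> TT \<subseteq> Pow S \<and>
     \<not> (\<exists>T1\<in>TT. \<exists>T2\<in>TT. T1 = S - T2)"

definition is_r_test_set :: "'a set \<Rightarrow> 'a set set \<Rightarrow> nat \<Rightarrow> 'a set set \<Rightarrow> bool" where
  "is_r_test_set S TT r F \<longleftrightarrow> F \<subseteq> TT \<and> (\<forall>a\<in>item_pairs S. num_diff a F \<ge> r)"

definition feasible :: "'a set \<Rightarrow> 'a set set \<Rightarrow> nat \<Rightarrow> bool" where
  "feasible S TT r \<longleftrightarrow> (\<exists>F. is_r_test_set S TT r F)"

definition opt_size :: "'a set \<Rightarrow> 'a set set \<Rightarrow> nat \<Rightarrow> nat" where
  "opt_size S TT r = (LEAST k. \<exists>F. is_r_test_set S TT r F \<and> card F = k)"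

text \<open>Differentiation measure; nat subtraction gives max(r - perp, 0).\<close>
definition diff_measure :: "'a set \<Rightarrow> nat \<Rightarrow> 'a set set \<Rightarrow> nat" where
  "diff_measure S r F = (\<Sum>a\<in>item_pairs S. r - num_diff a F)"

text \<open>Partial families reachable by SGA with some tie-breaking.\<close>
inductive sga_reach :: "'a set \<Rightarrow> 'a set set \<Rightarrow> nat \<Rightarrow> 'a set set \<Rightarrow> bool"
  for S TT r where
  start: "sga_reach S TT r {}"
| step: "\<lbrakk> sga_reach S TT r F; diff_measure S r F > 0; T \<in> TT - F;
           \<forall>T'\<in>TT - F. diff_measure S r (insert T F) \<le> diff_measure S r (insert T' F) \<rbrakk>
         \<Longrightarrow> sga_reach S TT r (insert T F)"

definition sga_output :: "'a set \<Rightarrow> 'a set set \<Rightarrow> nat \<Rightarrow> 'a set set \<Rightarrow> bool" where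
  "sga_output S TT r F \<longleftrightarrow> sga_reach S TT r F \<and> diff_measure S r F = 0"

end

theory Submission
  imports Defs
begin

text \<open>
Let D be the differentiation measure of the current partial solution and Q an r-test set of size m.
Counted over the pairs that are still short of r differentiations, the tests of Q supply at least D
differentiations, so the greedy test lowers D by at least D/m, as in the classical set cover
argument. A pair differentiated by more than r tests of Q supplies at least one more than it needs,
while a pair differentiated by exactly r tests of Q is determined by its smaller item and those r
tests, so there are at most n m^r such pairs. Hence, as long as D exceeds B = r n m^r ln n, the
greedy test lowers D by at least a D/m with a = 1 + (1 - 1/ln n)/r. A potential of slope m/D below B
and of slope m/(a D) above B therefore drops by at least one per greedy step, and its value at the
initial measure r n(n-1)/2 is the bound.
\<close>

lemma differentiates_pair_iff:
  assumes "u \<noteq> v"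
  shows "differentiates {u, v} T \<longleftrightarrow> (u \<in> T) \<noteq> (v \<in> T)"
proof -
  have "T \<inter> {u, v} = (if u \<in> T then {u} else {}) \<union> (if v \<in> T then {v} else {})" by auto
  then show ?thesis using assms unfolding differentiates_def by (auto split: if_splits)
qed

lemma finite_item_pairs: "finite S \<Longrightarrow> finite (item_pairs S)"
  unfolding item_pairs_def by (rule finite_subset[of _ "Pow S"]) auto

lemma card_item_pairs: "finite S \<Longrightarrow> card (item_pairs S) = card S choose 2"
  unfolding item_pairs_def by (simp add: n_subsets)

lemma real_choose_two: "real (n choose 2) = real n * (real n - 1) / 2"
  by (cases n) (auto simp: choose_two field_char_0_class.of_nat_div algebra_simps)

lemma diff_measure_empty: "finite S \<Longrightarrow> diff_measure S r {} = r * (card S choose 2)"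
  unfolding diff_measure_def num_diff_def by (simp add: card_item_pairs)

lemma num_diff_insert:
  assumes "finite F" "T \<notin> F"
  shows "num_diff a (insert T F) = num_diff a F + (if differentiates a T then 1 else 0)"
proof -
  have "{T' \<in> insert T F. differentiates a T'}
      = (if differentiates a T then insert T else id) {T' \<in> F. differentiates a T'}"
    by auto
  then show ?thesis using assms unfolding num_diff_def by simp
qed

lemma num_diff_le_card: "finite F \<Longrightarrow> num_diff a F \<le> card F"
  unfolding num_diff_def by (intro card_mono) auto

lemma r_le_card_if_is_r_test_set:
  assumes "is_r_test_set S TT r Q" "finite Q" "a \<in> item_pairs S"
  shows "r \<le> card Q"
  using assms num_diff_le_card[of Q a] unfolding is_r_test_set_def by force

lemma sga_reach_subset: "sga_reach S TT r F \<Longrightarrow> F \<subseteq> TT"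
  by (induction rule: sga_reach.induct) auto

lemma opt_size_attained:
  assumes "feasible S TT r"
  obtains Q where "is_r_test_set S TT r Q" "card Q = opt_size S TT r"
proof -
  from assms have "\<exists>k F. is_r_test_set S TT r F \<and> card F = k" unfolding feasible_def by auto
  from LeastI_ex[OF this] show ?thesis using that unfolding opt_size_def by auto
qed

lemma sga_reach_card_le_potential:
  fixes \<phi> :: "nat \<Rightarrow> real"
  assumes "sga_reach S TT r F" "finite TT"
    and step: "\<And>F T. F \<subseteq> TT \<Longrightarrow> 0 < diff_measure S r F \<Longrightarrow> T \<in> TT - F \<Longrightarrow>
      \<forall>T'\<in>TT - F. diff_measure S r (insert T F) \<le> diff_measure S r (insert T' F) \<Longrightarrow>
      \<phi> (diff_measure S r (insert T F)) + 1 \<le> \<phi> (diff_measure S r F)"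
  shows "card F + \<phi> (diff_measure S r F) \<le> \<phi> (diff_measure S r {})"
  using assms(1)
proof (induction rule: sga_reach.induct)
  case start
  then show ?case by simp
next
  case (step F T)
  have "F \<subseteq> TT" using step.hyps(1) by (rule sga_reach_subset)
  then have "card (insert T F) = card F + 1"
    using step.hyps(3) assms(2) finite_subset by fastforce
  moreover have "\<phi> (diff_measure S r (insert T F)) + 1 \<le> \<phi> (diff_measure S r F)"
    using assms(3)[OF \<open>F \<subseteq> TT\<close> step.hyps(2-4)] .
  ultimately show ?case using step.IH by simp
qed

definition gain :: "'a set \<Rightarrow> nat \<Rightarrow> 'a set set \<Rightarrow> 'a set \<Rightarrow> nat" where
  "gain S r F T = (\<Sum>a\<in>item_pairs S. if differentiates a T \<and> num_diff a F < r then 1 else 0)"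

lemma diff_measure_insert:
  assumes "finite F" "T \<notin> F"
  shows "diff_measure S r F = diff_measure S r (insert T F) + gain S r F T"
proof -
  have "r - num_diff a F = (r - num_diff a (insert T F))
          + (if differentiates a T \<and> num_diff a F < r then 1 else 0)" for a
    using num_diff_insert[OF assms] by auto
  then show ?thesis unfolding diff_measure_def gain_def by (simp add: sum.distrib)
qed

definition residual_diff :: "'a set \<Rightarrow> nat \<Rightarrow> 'a set set \<Rightarrow> 'a set set \<Rightarrow> nat" where
  "residual_diff S r Q F =
     (\<Sum>a\<in>item_pairs S. if num_diff a F < r then num_diff a Q - num_diff a F else 0)"

lemma diff_measure_le_residual_diff:
  assumes "is_r_test_set S TT r Q"
  shows "diff_measure S r F \<le> residual_diff S r Q F"
  unfolding diff_measure_def residual_diff_def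
proof (rule sum_mono)
  fix a assume "a \<in> item_pairs S"
  then have "r \<le> num_diff a Q" using assms unfolding is_r_test_set_def by auto
  then show "r - num_diff a F \<le> (if num_diff a F < r then num_diff a Q - num_diff a F else 0)"
    by auto
qed

lemma residual_diff_le_card_mult_gain:
  assumes "finite Q" "finite F" "Q \<subseteq> TT" "T \<in> TT - F"
    and greedy: "\<forall>T'\<in>TT - F. diff_measure S r (insert T F) \<le> diff_measure S r (insert T' F)"
  shows "residual_diff S r Q F \<le> card Q * gain S r F T"
proof -
  have gain_le: "gain S r F T' \<le> gain S r F T" if "T' \<in> Q - F" for T'
    using greedy that assms(3,4) diff_measure_insert[OF \<open>finite F\<close>, of T S r]
      diff_measure_insert[OF \<open>finite F\<close>, of T' S r] by force
  have num_diff_le: "num_diff a Q - num_diff a F \<le> card {T' \<in> Q - F. differentiates a T'}" for a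
  proof -
    have "{T' \<in> Q. differentiates a T'} \<subseteq> {T' \<in> Q - F. differentiates a T'} \<union> {T' \<in> F. differentiates a T'}"
      by auto
    then have "num_diff a Q \<le> card ({T' \<in> Q - F. differentiates a T'} \<union> {T' \<in> F. differentiates a T'})"
      unfolding num_diff_def using assms(1,2) by (intro card_mono) auto
    also have "\<dots> \<le> card {T' \<in> Q - F. differentiates a T'} + num_diff a F"
      unfolding num_diff_def by (rule card_Un_le)
    finally show ?thesis by linarith
  qed
  have "residual_diff S r Q F
      \<le> (\<Sum>a\<in>item_pairs S. \<Sum>T'\<in>Q - F. if differentiates a T' \<and> num_diff a F < r then 1 else 0)"
    unfolding residual_diff_def using num_diff_le assms(1)
    by (intro sum_mono) (simp add: sum.inter_filter[symmetric])
  also have "\<dots> = (\<Sum>T'\<in>Q - F. gain S r F T')"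
    unfolding gain_def by (rule sum.swap)
  also have "\<dots> \<le> card (Q - F) * gain S r F T"
    using sum_bounded_above[of "Q - F" "gain S r F" "gain S r F T"] gain_le by simp
  also have "\<dots> \<le> card Q * gain S r F T"
    using assms(1) by (intro mult_right_mono card_mono) auto
  finally show ?thesis .
qed

definition tight_pairs :: "'a set \<Rightarrow> nat \<Rightarrow> 'a set set \<Rightarrow> 'a set set" where
  "tight_pairs S r Q = {a \<in> item_pairs S. num_diff a Q \<le> r}"

lemma card_tight_pairs_le:
  fixes S :: "'a::linorder set"
  assumes Q: "is_r_test_set S TT r Q" and "0 < r" "finite S" "finite Q"
  shows "card (tight_pairs S r Q) \<le> card S * card Q ^ r"
proof -
  let ?f = "\<lambda>a. (Min a, {T \<in> Q. differentiates a T})"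
  have pair_Min: "\<exists>y. a = {Min a, y} \<and> y \<noteq> Min a \<and> y \<in> S \<and> Min a \<in> S" if "a \<in> item_pairs S" for a
  proof -
    from that obtain u v where uv: "a = {u, v}" "u \<noteq> v" "a \<subseteq> S"
      unfolding item_pairs_def by (auto simp: card_2_iff)
    then have "Min a = u \<or> Min a = v" using Min_in[of a] by auto
    then show ?thesis using uv by auto
  qed
  have r_le: "r \<le> num_diff a Q" if "a \<in> item_pairs S" for a
    using that Q unfolding is_r_test_set_def by auto
  have "?f a \<in> S \<times> {A. A \<subseteq> Q \<and> card A = r}" if "a \<in> tight_pairs S r Q" for a
  proof -
    have "Min a \<in> S" using pair_Min that unfolding tight_pairs_def by blast
    moreover have "card {T \<in> Q. differentiates a T} = r"
      using r_le that unfolding tight_pairs_def num_diff_def by (simp add: le_antisym)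
    ultimately show ?thesis by auto
  qed
  then have "?f ` tight_pairs S r Q \<subseteq> S \<times> {A. A \<subseteq> Q \<and> card A = r}" by blast
  moreover have "inj_on ?f (tight_pairs S r Q)"
  proof (rule inj_onI)
    fix a b assume a: "a \<in> tight_pairs S r Q" and b: "b \<in> tight_pairs S r Q" and eq: "?f a = ?f b"
    obtain y where y: "a = {Min a, y}" "y \<noteq> Min a" "y \<in> S"
      using pair_Min a unfolding tight_pairs_def by blast
    obtain y' where y': "b = {Min a, y'}" "y' \<noteq> Min a" "y' \<in> S"
      using pair_Min b eq unfolding tight_pairs_def by fastforce
    show "a = b"
    proof (rule ccontr)
      assume "a \<noteq> b"
      then have "y \<noteq> y'" using y y' by auto
      then have pair: "{y, y'} \<in> item_pairs S" using y y' unfolding item_pairs_def by auto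
      have "\<not> differentiates {y, y'} T" if "T \<in> Q" for T
      proof -
        have "differentiates a T \<longleftrightarrow> differentiates b T" using eq that by blast
        then have "((Min a \<in> T) \<noteq> (y \<in> T)) \<longleftrightarrow> ((Min a \<in> T) \<noteq> (y' \<in> T))"
          using differentiates_pair_iff[of "Min a" y T] differentiates_pair_iff[of "Min a" y' T] y y'
          by metis
        then show ?thesis using differentiates_pair_iff[OF \<open>y \<noteq> y'\<close>] by blast
      qed
      then have "{T \<in> Q. differentiates {y, y'} T} = {}" by blast
      then have "num_diff {y, y'} Q = 0" unfolding num_diff_def by (metis card.empty)
      then show False using r_le[OF pair] \<open>0 < r\<close> by simp
    qed
  qed
  ultimately have "card (tight_pairs S r Q) \<le> card (S \<times> {A. A \<subseteq> Q \<and> card A = r})"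
    using assms by (intro card_inj_on_le) auto
  also have "\<dots> = card S * (card Q choose r)"
    using assms by (simp add: card_cartesian_product n_subsets)
  also have "\<dots> \<le> card S * card Q ^ r"
    by (cases "r \<le> card Q") (simp_all add: binomial_le_pow binomial_eq_0)
  finally show ?thesis .
qed

lemma diff_measure_le_residual_diff_tight:
  assumes "is_r_test_set S TT r Q" "finite S"
  shows "(r + 1) * diff_measure S r F \<le> r * residual_diff S r Q F + r * card (tight_pairs S r Q)"
proof -
  have "(r + 1) * (r - num_diff a F)
      \<le> r * (if num_diff a F < r then num_diff a Q - num_diff a F else 0)
        + r * (if num_diff a Q \<le> r then 1 else 0)" if "a \<in> item_pairs S" for a
  proof -
    have "r \<le> num_diff a Q" using assms that unfolding is_r_test_set_def by auto
    then consider "r \<le> num_diff a F" | "num_diff a F < r" "num_diff a Q = r"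
      | "num_diff a F < r" "r < num_diff a Q" by linarith
    then show ?thesis
    proof cases
      case 1
      then show ?thesis by simp
    next
      case 2
      then show ?thesis by (simp add: algebra_simps)
    next
      case 3
      then have "r * (r - num_diff a F + 1) \<le> r * (num_diff a Q - num_diff a F)"
        by (intro mult_le_mono2) linarith
      moreover have "(r + 1) * (r - num_diff a F) \<le> r * (r - num_diff a F + 1)"
        by (simp add: algebra_simps)
      ultimately show ?thesis using 3 by simp
    qed
  qed
  then have "(r + 1) * diff_measure S r F
      \<le> (\<Sum>a\<in>item_pairs S. r * (if num_diff a F < r then num_diff a Q - num_diff a F else 0)
                             + r * (if num_diff a Q \<le> r then 1 else 0))"
    unfolding diff_measure_def sum_distrib_left by (rule sum_mono)
  also have "\<dots> = r * residual_diff S r Q F + r * card (tight_pairs S r Q)"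
    unfolding residual_diff_def tight_pairs_def using finite_item_pairs[OF assms(2)]
    by (simp add: sum.distrib sum_distrib_left[symmetric] sum.inter_filter[symmetric])
  finally show ?thesis .
qed

lemma residual_diff_le_greedy_decrease:
  assumes "finite TT" "Q \<subseteq> TT" "F \<subseteq> TT" "T \<in> TT - F"
    and "\<forall>T'\<in>TT - F. diff_measure S r (insert T F) \<le> diff_measure S r (insert T' F)"
  shows "residual_diff S r Q F \<le> card Q * (diff_measure S r F - diff_measure S r (insert T F))"
proof -
  have "finite F" "finite Q" using assms(1-3) finite_subset by auto
  then have "diff_measure S r F - diff_measure S r (insert T F) = gain S r F T"
    using diff_measure_insert[of F T S r] assms(4) by simp
  then show ?thesis
    using residual_diff_le_card_mult_gain[OF \<open>finite Q\<close> \<open>finite F\<close> assms(2,4,5)] by simp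
qed

lemma greedy_step_gain:
  assumes "finite TT" "is_r_test_set S TT r Q" "F \<subseteq> TT" "T \<in> TT - F"
    and "\<forall>T'\<in>TT - F. diff_measure S r (insert T F) \<le> diff_measure S r (insert T' F)"
  shows "diff_measure S r F \<le> card Q * (diff_measure S r F - diff_measure S r (insert T F))"
proof -
  have "Q \<subseteq> TT" using assms(2) unfolding is_r_test_set_def by simp
  then show ?thesis
    using order_trans[OF diff_measure_le_residual_diff[OF assms(2), of F]
        residual_diff_le_greedy_decrease[OF assms(1) _ assms(3-5)]] by blast
qed

lemma greedy_step_gain_tight:
  fixes S :: "'a::linorder set"
  assumes "finite S" "finite TT" "0 < r" "is_r_test_set S TT r Q" "F \<subseteq> TT" "T \<in> TT - F"
    and "\<forall>T'\<in>TT - F. diff_measure S r (insert T F) \<le> diff_measure S r (insert T' F)"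
  shows "(r + 1) * diff_measure S r F
    \<le> r * (card Q * (diff_measure S r F - diff_measure S r (insert T F))) + r * (card S * card Q ^ r)"
proof -
  have "Q \<subseteq> TT" "finite Q" using assms(2,4) finite_subset unfolding is_r_test_set_def by auto
  then have "r * residual_diff S r Q F
      \<le> r * (card Q * (diff_measure S r F - diff_measure S r (insert T F)))"
    using residual_diff_le_greedy_decrease[OF assms(2) _ assms(5-7)] by simp
  moreover have "r * card (tight_pairs S r Q) \<le> r * (card S * card Q ^ r)"
    using card_tight_pairs_le[OF assms(4,3,1) \<open>finite Q\<close>] by simp
  ultimately show ?thesis
    using diff_measure_le_residual_diff_tight[OF assms(4,1), of F] by linarith
qed

lemma mult_ln_div_ge_1:
  fixes x y c :: real
  assumes "0 < y" "y < x" "x \<le> c * (x - y)"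
  shows "1 \<le> c * ln (x / y)"
proof -
  have "0 < c" using assms by (smt (verit) mult_nonpos_nonneg)
  have "(x - y) / x \<le> ln (x / y)"
    using ln_le_minus_one[of "y / x"] assms by (simp add: ln_div field_simps)
  then have "c * ((x - y) / x) \<le> c * ln (x / y)" using \<open>0 < c\<close> by (intro mult_left_mono) auto
  moreover have "1 \<le> c * ((x - y) / x)" using assms by (simp add: field_simps)
  ultimately show ?thesis by linarith
qed

definition potential :: "real \<Rightarrow> real \<Rightarrow> real" where
  "potential m x = (if x < m then x else m * (1 + ln (x / m)))"

definition refined_potential :: "real \<Rightarrow> real \<Rightarrow> real \<Rightarrow> real \<Rightarrow> real" where
  "refined_potential m B a x =
     (if x \<le> B then potential m x else potential m B + 1 + m / a * ln (x / B))"

lemma potential_ge: "0 < m \<Longrightarrow> m \<le> x \<Longrightarrow> m \<le> potential m x"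
  unfolding potential_def by simp

lemma potential_mono:
  assumes "0 < m" "x \<le> y"
  shows "potential m x \<le> potential m y"
proof (cases "x < m")
  case True
  then have "potential m x \<le> m" by (simp add: potential_def)
  moreover have "m \<le> potential m y" if "m \<le> y" using potential_ge assms(1) that .
  ultimately show ?thesis using True assms(2) by (auto simp: potential_def)
next
  case False
  then show ?thesis using assms by (simp add: potential_def divide_right_mono)
qed

lemma potential_step:
  fixes m D D' :: nat
  assumes "1 \<le> m" "0 < D" "D \<le> m * (D - D')"
  shows "potential m D' + 1 \<le> potential m D"
proof -
  have "D' < D" using assms by (cases "D' < D") auto
  then have gain: "real D \<le> real m * (real D - real D')"
    using assms(3) by (metis of_nat_diff of_nat_le_iff of_nat_mult less_imp_le)
  consider "D < m" | "D' < m" "m \<le> D" | "m \<le> D'" by linarith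
  then show ?thesis
  proof cases
    case 1
    then show ?thesis using \<open>D' < D\<close> by (simp add: potential_def)
  next
    case 2
    then have "potential m D' + 1 \<le> m" by (simp add: potential_def)
    then show ?thesis using potential_ge[of m D] 2 assms(1) by simp
  next
    case 3
    have "1 \<le> m * ln (real D / real D')"
      using mult_ln_div_ge_1[OF _ _ gain] \<open>D' < D\<close> 3 assms(1) by simp
    moreover have "ln (real D / m) = ln (real D / real D') + ln (real D' / m)"
      using 3 \<open>D' < D\<close> assms(1) by (simp add: ln_div)
    ultimately show ?thesis using 3 \<open>D' < D\<close> by (simp add: potential_def algebra_simps)
  qed
qed

lemma refined_potential_step:
  fixes m D D' :: nat and B a :: real
  assumes "1 \<le> m" "0 < B" "0 < a" "0 < D" "D \<le> m * (D - D')"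
    and refined_gain: "B < D \<Longrightarrow> a * D \<le> m * (real D - real D')"
  shows "refined_potential m B a D' + 1 \<le> refined_potential m B a D"
proof -
  have "D' < D" using assms by (cases "D' < D") auto
  consider "D \<le> B" | "D' \<le> B" "B < D" | "B < D'" by linarith
  then show ?thesis
  proof cases
    case 1
    then show ?thesis
      using potential_step[OF assms(1,4,5)] \<open>D' < D\<close> by (simp add: refined_potential_def)
  next
    case 2
    then have "potential m D' \<le> potential m B" "0 \<le> m / a * ln (D / B)"
      using potential_mono assms(1-3) by auto
    then show ?thesis using 2 by (simp add: refined_potential_def)
  next
    case 3
    have "D \<le> m / a * (real D - real D')"
      using refined_gain 3 \<open>D' < D\<close> assms(3) by (simp add: field_simps)
    moreover have "0 < real D'" using 3 assms(2) by linarith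
    ultimately have "1 \<le> m / a * ln (real D / real D')"
      using mult_ln_div_ge_1[of "real D'" "real D" "m / a"] \<open>D' < D\<close> by linarith
    moreover have "ln (real D / B) = ln (real D / real D') + ln (real D' / B)"
      using 3 \<open>D' < D\<close> assms(2) by (simp add: ln_div)
    ultimately show ?thesis using 3 \<open>D' < D\<close> by (simp add: refined_potential_def algebra_simps)
  qed
qed

lemma refined_gain:
  fixes r L D G N :: real
  assumes "0 < r" "0 < L" "(r + 1) * D \<le> r * G + r * N" "r * N * L < D"
  shows "(1 + (1 - 1 / L) / r) * D \<le> G"
proof -
  have "r * N < D / L" using assms(2,4) by (simp add: field_simps)
  then have "(r + 1) * D - D / L \<le> r * G" using assms(3) by linarith
  moreover have "r * ((1 + (1 - 1 / L) / r) * D) = (r + 1) * D - D / L"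
    using assms(1) by (simp add: field_simps)
  ultimately show ?thesis using assms(1) by (smt (verit) mult_le_cancel_left_pos)
qed

lemma potential_le_below_threshold:
  fixes m R N Z D :: real
  assumes "1 \<le> m" "1 \<le> R" "0 \<le> N" "0 \<le> Z" "0 < D"
    and "ln D \<le> ln R + 2 * N" "ln D \<le> N + ln R + Z + R * ln m"
  shows "potential m D \<le> (1 + ln R + (2 - 1 / R) * N + Z) * m"
proof -
  have "1 / R \<le> 1" using assms(2) by simp
  then have "0 \<le> (2 - 1 / R) * N" using assms(3) by simp
  then have coeff: "1 \<le> 1 + ln R + (2 - 1 / R) * N + Z" using assms(2,4) by simp
  show ?thesis
  proof (cases "D < m")
    case True
    then show ?thesis using coeff assms(1) by (simp add: potential_def) (smt (verit) mult_le_cancel_right1)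
  next
    case False
    \<comment> \<open>interpolate between the two upper bounds for ln D with weights 1/R and 1 - 1/R\<close>
    have "ln D = ln D / R + (1 - 1 / R) * ln D" using assms(2) by (simp add: field_simps)
    also have "\<dots> \<le> (N + ln R + Z + R * ln m) / R + (1 - 1 / R) * (ln R + 2 * N)"
      using assms(2,6,7) by (intro add_mono divide_right_mono mult_left_mono) auto
    also have "\<dots> = ln R + (2 - 1 / R) * N + Z / R + ln m" using assms(2) by (simp add: field_simps)
    also have "Z / R \<le> Z / 1" using assms(2,4) by (intro divide_left_mono) auto
    finally have "1 + ln (D / m) \<le> 1 + ln R + (2 - 1 / R) * N + Z"
      using assms(1,5) by (simp add: ln_div)
    then show ?thesis using False assms(1) by (simp add: potential_def mult.commute)
  qed
qed

lemma divide_refined_rate_le: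
  fixes R L X Y :: real
  assumes "1 \<le> R" "1 \<le> L" "0 \<le> Y" "X \<le> L - R * Y"
  shows "X / (1 + (1 - 1 / L) / R) \<le> (1 - 1 / (2 * R)) * L + 1 - (R - 1) * Y"
proof -
  define a where "a = 1 + (1 - 1 / L) / R"
  have "0 \<le> (1 - 1 / L) / R" "(1 - 1 / L) / R \<le> 1 / R"
    using assms(1,2) by (auto simp: field_simps)
  then have "1 \<le> a" unfolding a_def by linarith
  have "(R - 1) * ((1 - 1 / L) / R) \<le> (R - 1) * (1 / R)"
    using \<open>(1 - 1 / L) / R \<le> 1 / R\<close> assms(1) by (intro mult_left_mono) auto
  also have "\<dots> \<le> 1" using assms(1) by (simp add: field_simps)
  finally have "a * (R - 1) \<le> R" unfolding a_def by (simp add: algebra_simps)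
  have "a * (L * R / (R + 1)) = L - 1 / (R + 1)"
  proof -
    have "a * R * L = (R + 1) * L - 1" using assms(1,2) unfolding a_def by (simp add: field_simps)
    moreover have "a * (L * R / (R + 1)) = (a * R * L) / (R + 1)" by simp
    ultimately show ?thesis using assms(1) by (simp add: diff_divide_distrib)
  qed
  moreover have "a * (R - 1) * Y \<le> R * Y"
    using \<open>a * (R - 1) \<le> R\<close> assms(3) by (intro mult_right_mono) auto
  moreover have "1 / (R + 1) \<le> 1" using assms(1) by simp
  ultimately have "X \<le> a * (L * R / (R + 1) + 1 - (R - 1) * Y)"
    using \<open>1 \<le> a\<close> assms(4) by (simp add: algebra_simps)
  then have "X / a \<le> L * R / (R + 1) + 1 - (R - 1) * Y"
    using \<open>1 \<le> a\<close> by (simp add: pos_divide_le_eq mult.commute)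
  moreover have "R / (R + 1) * L \<le> (1 - 1 / (2 * R)) * L"
    using assms(1,2) by (intro mult_right_mono) (auto simp: field_simps)
  ultimately show ?thesis unfolding a_def by (simp add: mult.commute)
qed

lemma refined_potential_le_above_threshold:
  fixes m R L B D :: real
  assumes "1 \<le> m" "m \<le> B" "1 \<le> R" "1 \<le> L" "B < D"
    and "ln D \<le> ln R + 2 * L" "ln B = L + ln R + ln L + R * ln m"
  shows "refined_potential m B (1 + (1 - 1 / L) / R) D
    \<le> (3 + ln R + ln L + (2 - 1 / (2 * R)) * L) * m"
proof -
  define a where "a = 1 + (1 - 1 / L) / R"
  have "ln (D / B) = ln D - ln B" using assms(1,2,5) by (simp add: ln_div)
  then have "ln (D / B) \<le> L - R * ln m" using assms(6,7) ln_ge_zero[OF assms(4)] by linarith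
  then have "ln (D / B) / a \<le> (1 - 1 / (2 * R)) * L + 1 - (R - 1) * ln m"
    unfolding a_def using assms(1,3,4) by (intro divide_refined_rate_le) auto
  moreover have "ln (B / m) = L + ln R + ln L + (R - 1) * ln m"
    using assms(1,2,7) by (simp add: ln_div algebra_simps)
  moreover have "1 / m \<le> 1" using assms(1) by simp
  ultimately have "1 + ln (B / m) + 1 / m + ln (D / B) / a \<le> 3 + ln R + ln L + (2 - 1 / (2 * R)) * L"
    by (simp add: algebra_simps)
  then have "m * (1 + ln (B / m) + 1 / m + ln (D / B) / a) \<le> (3 + ln R + ln L + (2 - 1 / (2 * R)) * L) * m"
    using assms(1) by (simp add: mult.commute)
  moreover have "m * (1 + ln (B / m) + 1 / m + ln (D / B) / a) = m * (1 + ln (B / m)) + 1 + m / a * ln (D / B)"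
    using assms(1) by (simp add: distrib_left)
  ultimately show ?thesis using assms(2,5) unfolding a_def by (simp add: refined_potential_def potential_def)
qed

lemma one_le_ln_of_ge_3:
  fixes n :: real
  assumes "3 \<le> n"
  shows "1 \<le> ln n"
proof -
  have "exp 1 \<le> (3::real)" by (rule exp_le)
  then show ?thesis using assms by (subst ln_ge_iff) auto
qed

lemma refined_potential_initial_le:
  fixes n m :: real and r :: nat
  assumes "3 \<le> n" "1 \<le> r" "real r \<le> m"
  shows "refined_potential m (r * n * ln n * m ^ r) (1 + (1 - 1 / ln n) / r) (r * n * (n - 1) / 2)
    \<le> ((2 - 1 / (2 * real r)) * ln n + 3 / 2 * ln r + 4 + ln (ln n)) * m"
proof -
  define L B D where "L = ln n" and "B = r * n * L * m ^ r" and "D = r * n * (n - 1) / 2"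
  have L: "1 \<le> L" unfolding L_def using assms(1) by (rule one_le_ln_of_ge_3)
  have m: "1 \<le> m" using assms(2,3) by linarith
  have "m \<le> m ^ r" using m assms(2) by (metis power_increasing power_one_right)
  also have "\<dots> \<le> (r * n * L) * m ^ r"
  proof -
    have "1 * 1 \<le> real r * n" using assms(1,2) by (intro mult_mono) auto
    then have "1 * 1 \<le> (r * n) * L" using L by (intro mult_mono) auto
    then show ?thesis using m by simp
  qed
  finally have "m \<le> B" unfolding B_def .
  have lnB: "ln B = L + ln r + ln L + r * ln m"
    unfolding B_def L_def using assms L m by (simp add: ln_mult ln_realpow L_def)
  have "0 < D" unfolding D_def using assms by simp
  have "D \<le> r * n ^ 2" unfolding D_def using assms by (simp add: power2_eq_square field_simps)
  then have "ln D \<le> ln (r * n ^ 2)" using \<open>0 < D\<close> by simp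
  also have "\<dots> = ln r + 2 * L" unfolding L_def using assms by (simp add: ln_mult ln_realpow)
  finally have lnD: "ln D \<le> ln r + 2 * L" .
  define C where "C = (2 - 1 / (2 * real r)) * L + 3 / 2 * ln r + 4 + ln L"
  have "0 \<le> ln r" using assms(2) by simp
  have "1 / (2 * real r) \<le> 1 / r" using assms(2) by (simp add: field_simps)
  show ?thesis
  proof (cases "D \<le> B")
    case True
    then have "ln D \<le> ln B" using \<open>0 < D\<close> by simp
    then have "potential m D \<le> (1 + ln r + (2 - 1 / r) * L + ln L) * m"
      using potential_le_below_threshold[OF m _ _ _ \<open>0 < D\<close> lnD] lnB assms(2) L by simp
    also have "\<dots> \<le> C * m"
    proof -
      have "(2 - 1 / r) * L \<le> (2 - 1 / (2 * real r)) * L"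
        using \<open>1 / (2 * real r) \<le> 1 / r\<close> L by (intro mult_right_mono) auto
      then show ?thesis unfolding C_def using m \<open>0 \<le> ln r\<close> by (intro mult_right_mono) auto
    qed
    finally show ?thesis using True unfolding C_def B_def D_def L_def by (simp add: refined_potential_def)
  next
    case False
    then have "refined_potential m B (1 + (1 - 1 / L) / r) D \<le> (3 + ln r + ln L + (2 - 1 / (2 * real r)) * L) * m"
      using refined_potential_le_above_threshold[OF m \<open>m \<le> B\<close> _ L _ lnD lnB] assms(2)
      by simp
    also have "\<dots> \<le> C * m" unfolding C_def using m \<open>0 \<le> ln r\<close> by (intro mult_right_mono) auto
    finally show ?thesis unfolding C_def B_def D_def L_def .
  qed
qed

lemma sga_output_card_le_small:
  assumes "finite S" "finite TT" "is_r_test_set S TT r Q" "sga_output S TT r F" "card S \<le> 2"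
  shows "card F \<le> card Q"
proof -
  have "real (card F) + real (diff_measure S r F) \<le> real (diff_measure S r {})"
  proof (rule sga_reach_card_le_potential[OF _ assms(2)])
    show "sga_reach S TT r F" using assms(4) unfolding sga_output_def ..
  next
    fix F' T assume "F' \<subseteq> TT" "0 < diff_measure S r F'" "T \<in> TT - F'"
      "\<forall>T'\<in>TT - F'. diff_measure S r (insert T F') \<le> diff_measure S r (insert T' F')"
    from greedy_step_gain[OF assms(2,3) this(1,3,4)] this(2)
    show "real (diff_measure S r (insert T F')) + 1 \<le> real (diff_measure S r F')"
      by (cases "diff_measure S r (insert T F') < diff_measure S r F'") auto
  qed
  then have "card F \<le> diff_measure S r {}" using assms(4) unfolding sga_output_def by simp
  then have "card F \<le> r * (card S choose 2)" using diff_measure_empty[OF assms(1)] by simp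
  moreover have "r * (card S choose 2) \<le> card Q"
  proof (cases "card S = 2")
    case True
    then have "S \<in> item_pairs S" unfolding item_pairs_def by simp
    moreover have "finite Q" using assms(2,3) finite_subset unfolding is_r_test_set_def by auto
    ultimately show ?thesis using r_le_card_if_is_r_test_set[OF assms(3)] True by simp
  qed (use assms(5) in \<open>simp add: binomial_eq_0\<close>)
  ultimately show ?thesis by linarith
qed

lemma refined_potential_greedy_step:
  fixes S :: "'a::linorder set" and L :: real
  assumes S: "finite S" and TT: "finite TT" and r: "0 < r" and Q: "is_r_test_set S TT r Q"
    and L: "1 \<le> L" and F: "F \<subseteq> TT" "0 < diff_measure S r F" "T \<in> TT - F"
    and greedy: "\<forall>T'\<in>TT - F. diff_measure S r (insert T F) \<le> diff_measure S r (insert T' F)"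
  defines "\<phi> \<equiv> refined_potential (card Q) (real r * card S * L * real (card Q) ^ r) (1 + (1 - 1 / L) / r)"
  shows "\<phi> (diff_measure S r (insert T F)) + 1 \<le> \<phi> (diff_measure S r F)"
proof -
  define n m D D' where "n = real (card S)" and "m = real (card Q)"
    and "D = diff_measure S r F" and "D' = diff_measure S r (insert T F)"
  have gain: "D \<le> card Q * (D - D')"
    unfolding D_def D'_def using greedy_step_gain[OF TT Q F(1,3) greedy] .
  moreover have "0 < D" using F(2) unfolding D_def .
  ultimately have "D' < D" "card Q \<noteq> 0" by (auto intro: ccontr)
  have "item_pairs S \<noteq> {}" using F(2) unfolding diff_measure_def by auto
  then have "card S \<noteq> 0" using S unfolding item_pairs_def by auto
  have "(r + 1) * D \<le> r * (card Q * (D - D')) + r * (card S * card Q ^ r)"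
    unfolding D_def D'_def using greedy_step_gain_tight[OF S TT r Q F(1,3) greedy] .
  then have tight: "(real r + 1) * D \<le> r * (m * (real D - real D')) + r * (n * m ^ r)"
    using \<open>D' < D\<close> unfolding m_def n_def
    by (metis (mono_tags, lifting) of_nat_add of_nat_diff of_nat_le_iff of_nat_mult of_nat_power
        of_nat_1 less_imp_le)
  have "0 < r * n * L * m ^ r" using r L \<open>card Q \<noteq> 0\<close> \<open>card S \<noteq> 0\<close> unfolding m_def n_def by simp
  have "0 < 1 + (1 - 1 / L) / r" using L by (simp add: add_pos_nonneg)
  have "refined_potential m (r * n * L * m ^ r) (1 + (1 - 1 / L) / r) D' + 1
      \<le> refined_potential m (r * n * L * m ^ r) (1 + (1 - 1 / L) / r) D"
    unfolding m_def
  proof (rule refined_potential_step[OF _ _ _ \<open>0 < D\<close> gain])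
    show "(1 + (1 - 1 / L) / r) * D \<le> real (card Q) * (real D - real D')"
      if "r * n * L * real (card Q) ^ r < D"
      using refined_gain[OF _ _ tight] that r L unfolding m_def by (simp add: algebra_simps)
  qed (use \<open>card Q \<noteq> 0\<close> \<open>0 < r * n * L * m ^ r\<close> \<open>0 < 1 + (1 - 1 / L) / r\<close> m_def in auto)
  then show ?thesis unfolding \<phi>_def D_def D'_def m_def n_def .
qed

lemma sga_output_card_le_large:
  fixes S :: "'a::linorder set"
  assumes S: "finite S" and TT: "finite TT" and r: "0 < r" and Q: "is_r_test_set S TT r Q"
    and F: "sga_output S TT r F" and n: "3 \<le> card S"
  shows "card F \<le> ((2 - 1 / (2 * real r)) * ln (card S) + 3 / 2 * ln r + 4 + ln (ln (card S))) * card Q"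
proof -
  define n m L where "n = real (card S)" and "m = real (card Q)" and "L = ln n"
  define \<phi> where "\<phi> = refined_potential m (r * n * L * m ^ r) (1 + (1 - 1 / L) / r)"
  have L: "1 \<le> L" unfolding L_def n_def using n by (intro one_le_ln_of_ge_3) simp
  have "finite Q" using TT Q finite_subset unfolding is_r_test_set_def by auto
  obtain u where "u \<subseteq> S" "card u = 2" using obtain_subset_with_card_n[of 2 S] n by auto
  then have "u \<in> item_pairs S" unfolding item_pairs_def by auto
  then have "real r \<le> m" unfolding m_def using r_le_card_if_is_r_test_set[OF Q \<open>finite Q\<close>] by simp
  have "card F + \<phi> (diff_measure S r F) \<le> \<phi> (diff_measure S r {})"
  proof (rule sga_reach_card_le_potential[OF _ TT])
    show "sga_reach S TT r F" using F unfolding sga_output_def by simp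
  next
    fix F' T assume "F' \<subseteq> TT" "0 < diff_measure S r F'" "T \<in> TT - F'"
      "\<forall>T'\<in>TT - F'. diff_measure S r (insert T F') \<le> diff_measure S r (insert T' F')"
    then show "\<phi> (diff_measure S r (insert T F')) + 1 \<le> \<phi> (diff_measure S r F')"
      unfolding \<phi>_def m_def n_def by (rule refined_potential_greedy_step[OF S TT r Q L])
  qed
  moreover have "\<phi> 0 = 0"
    using r L \<open>real r \<le> m\<close> by (simp add: \<phi>_def refined_potential_def potential_def n_def)
  moreover have "real (diff_measure S r {}) = r * n * (n - 1) / 2"
    unfolding diff_measure_empty[OF S] n_def by (simp add: real_choose_two)
  ultimately have "card F \<le> \<phi> (r * n * (n - 1) / 2)" using F unfolding sga_output_def by simp
  also have "\<dots> \<le> ((2 - 1 / (2 * real r)) * ln n + 3 / 2 * ln r + 4 + ln (ln n)) * m"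
    unfolding \<phi>_def L_def using refined_potential_initial_le n r \<open>real r \<le> m\<close> unfolding n_def by simp
  finally show ?thesis unfolding n_def m_def .
qed

lemma sga_output_card_le:
  fixes S :: "'a::linorder set"
  assumes "finite S" "finite TT" "0 < r" "is_r_test_set S TT r Q" "sga_output S TT r F"
  shows "card F \<le> ((2 - 1 / (2 * real r)) * ln (card S) + 3 / 2 * ln r
                     + (4 + max 0 (ln (ln (card S))))) * card Q"
proof (cases "3 \<le> card S")
  case True
  then have "0 \<le> ln (ln (real (card S)))" using one_le_ln_of_ge_3[of "card S"] by simp
  then show ?thesis using sga_output_card_le_large[OF assms True] by (simp add: algebra_simps)
next
  case False
  have "1 / (2 * real r) \<le> 2" "0 \<le> ln (real (card S))"
    using assms(3) by (auto simp: field_simps) (cases "card S = 0"; simp)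
  then have "1 \<le> (2 - 1 / (2 * real r)) * ln (card S) + 3 / 2 * ln r + (4 + max 0 (ln (ln (card S))))"
    using assms(3) by simp
  moreover have "card F \<le> card Q" using sga_output_card_le_small[OF assms(1,2,4,5)] False by simp
  ultimately show ?thesis using mult_right_mono[of 1 _ "real (card Q)"] by fastforce
qed

lemma eventually_one_le_ln_ln: "\<forall>\<^sub>F n in at_top. 1 \<le> ln (ln (real (n::nat)))"
proof (rule eventually_at_top_linorderI)
  fix n :: nat assume "27 \<le> n"
  have "exp (exp 1) \<le> exp (3::real)" using exp_le by simp
  also have "\<dots> = exp 1 ^ 3" by (simp add: exp_of_nat_mult[symmetric])
  also have "\<dots> \<le> 3 ^ 3" using exp_le by (intro power_mono) auto
  also have "\<dots> \<le> real n" using \<open>27 \<le> n\<close> by simp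
  finally show "1 \<le> ln (ln (real n))" using \<open>27 \<le> n\<close> by (simp add: ln_ge_iff)
qed

theorem theorem1:
  shows "\<exists>g :: nat \<Rightarrow> real. g \<in> O(\<lambda>n. ln (ln (real n))) \<and>
    (\<forall>(r::nat) (S::nat set) TT F. r > 0 \<longrightarrow> valid_instance S TT \<longrightarrow> feasible S TT r \<longrightarrow>
        sga_output S TT r F \<longrightarrow>
        real (card F) \<le> ((2 - 1 / (2 * real r)) * ln (real (card S)) + 3 / 2 * ln (real r)
                           + g (card S)) * real (opt_size S TT r))"
proof (intro exI conjI allI impI)
  show "(\<lambda>n. 4 + max 0 (ln (ln (real n)))) \<in> O(\<lambda>n. ln (ln (real n)))"
    by (rule bigoI[where c = 5], use eventually_one_le_ln_ln in \<open>eventually_elim\<close>) auto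
  fix r :: nat and S :: "nat set" and TT F
  assume r: "r > 0" and "valid_instance S TT" and "feasible S TT r" and F: "sga_output S TT r F"
  obtain Q where Q: "is_r_test_set S TT r Q" "card Q = opt_size S TT r"
    using opt_size_attained[OF \<open>feasible S TT r\<close>] .
  have "finite S" "finite TT"
    using \<open>valid_instance S TT\<close> finite_subset unfolding valid_instance_def by auto
  from sga_output_card_le[OF this r Q(1) F] Q(2)
  show "real (card F) \<le> ((2 - 1 / (2 * real r)) * ln (real (card S)) + 3 / 2 * ln (real r)
      + (4 + max 0 (ln (ln (real (card S)))))) * real (opt_size S TT r)"
    by simp
qed

end
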